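(* Let $\lambda>0$, let $K$ be a $\lambda$-concave body in $\mathbb{R}^{n+1}$, and let $P$ be a $(k+1)$-dimensional linear subspace of $\mathbb{R}^{n+1}$ (with $0<k\leq n$). Then the orthogonal projection $K|P$ is a $\lambda$-concave body in $P$. Moreover, if $K$ is a $\lambda$-sausage body, then so is $K|P$.
   Context: A convex body is a compact convex set with non-empty interior; balls are closed. For $\lambda>0$, a convex body $K$ in a Euclidean space $E$ is $\lambda$-concave if for every $p\in\partial K$ there is a ball $B_{1/\lambda,p}\subset E$ of radius $1/\lambda$ whose boundary passes through $p$ such that $B_{1/\lambda,p}\cap U(p)\subseteq K\cap U(p)$ for some open neighborhood $U(p)$ of $p$ in $E$. A $\lambda$-sausage body is the convex hull of two (possibly coinciding) balls of radius $1/\lambda$. *)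

theory Defs
  imports "HOL-Analysis.Analysis"
begin

definition orth_proj :: "'a::euclidean_space set \<Rightarrow> 'a \<Rightarrow> 'a" where
  "orth_proj P x = (THE y. y \<in> P \<and> (\<forall>z\<in>P. (x - y) \<bullet> z = 0))"

definition convex_body_in :: "'a::euclidean_space set \<Rightarrow> 'a set \<Rightarrow> bool" where
  "convex_body_in S K \<longleftrightarrow> K \<subseteq> S \<and> compact K \<and> convex K \<and> (top_of_set S) interior_of K \<noteq> {}"

definition lambda_concave_in :: "'a::euclidean_space set \<Rightarrow> real \<Rightarrow> 'a set \<Rightarrow> bool" where
  "lambda_concave_in S l K \<longleftrightarrow> convex_body_in S K \<and>
     (\<forall>p \<in> (top_of_set S) frontier_of K.
        \<exists>c \<in> S. dist c p = 1 / l \<and>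
          (\<exists>U. openin (top_of_set S) U \<and> p \<in> U \<and> cball c (1 / l) \<inter> S \<inter> U \<subseteq> K \<inter> U))"

definition lambda_sausage_in :: "'a::euclidean_space set \<Rightarrow> real \<Rightarrow> 'a set \<Rightarrow> bool" where
  "lambda_sausage_in S l K \<longleftrightarrow>
     (\<exists>a \<in> S. \<exists>b \<in> S. K = convex hull ((cball a (1 / l) \<inter> S) \<union> (cball b (1 / l) \<inter> S)))"

end

theory Submission
  imports Defs
begin

(* The orthogonal projection onto P is linear, 1-Lipschitz and maps each ball of the ambient
   space onto the ball of P with the projected centre and the same radius; hence the projection
   of a convex body is a convex body in P, and the projection of a sausage body is a sausage body.
   A relative boundary point q of the projection lifts to a boundary point p of K, touched from
   inside by a ball with centre c.  If c - p had a nonzero component e orthogonal to P, the points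
   p + t e (small t > 0) would lie in the open inner ball and project to q, so the projection would
   contain a neighbourhood of q in P.  Hence c - p lies in P, and translating the inner ball along
   P gives an inner ball of the projection at q. *)

lemma orth_proj_ex1:
  fixes P :: "'a::euclidean_space set"
  assumes "subspace P"
  shows "\<exists>!y. y \<in> P \<and> (\<forall>z\<in>P. (x - y) \<bullet> z = 0)"
proof (rule ex_ex1I)
  obtain y w where "y \<in> span P" "\<And>z. z \<in> span P \<Longrightarrow> orthogonal w z" "x = y + w"
    by (rule orthogonal_subspace_decomp_exists[of P x]) blast
  moreover have "span P = P"
    using assms by simp
  ultimately show "\<exists>y. y \<in> P \<and> (\<forall>z\<in>P. (x - y) \<bullet> z = 0)"
    by (auto simp: orthogonal_def)
next
  fix y y'
  assume y: "y \<in> P \<and> (\<forall>z\<in>P. (x - y) \<bullet> z = 0)" and y': "y' \<in> P \<and> (\<forall>z\<in>P. (x - y') \<bullet> z = 0)"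
  then have "y' - y \<in> P"
    using assms by (simp add: subspace_diff)
  then have "(x - y) \<bullet> (y' - y) - (x - y') \<bullet> (y' - y) = 0"
    using y y' by simp
  then have "(y' - y) \<bullet> (y' - y) = 0"
    by (simp add: inner_diff_left)
  then show "y = y'"
    by simp
qed

lemma
  fixes P :: "'a::euclidean_space set"
  assumes "subspace P"
  shows orth_proj_in: "orth_proj P x \<in> P"
    and orth_proj_orthogonal: "z \<in> P \<Longrightarrow> (x - orth_proj P x) \<bullet> z = 0"
  using theI'[OF orth_proj_ex1[OF assms, of x]] unfolding orth_proj_def by auto

lemma orth_proj_eqI:
  fixes P :: "'a::euclidean_space set"
  assumes "subspace P" "y \<in> P" "\<And>z. z \<in> P \<Longrightarrow> (x - y) \<bullet> z = 0"
  shows "orth_proj P x = y"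
  unfolding orth_proj_def using orth_proj_ex1[OF assms(1)] assms(2,3) by (intro the1_equality) auto

lemma linear_orth_proj:
  fixes P :: "'a::euclidean_space set"
  assumes "subspace P"
  shows "linear (orth_proj P)"
proof (rule linearI)
  fix x y
  show "orth_proj P (x + y) = orth_proj P x + orth_proj P y"
  proof (rule orth_proj_eqI[OF assms])
    show "orth_proj P x + orth_proj P y \<in> P"
      using assms by (simp add: orth_proj_in subspace_add)
    fix z assume "z \<in> P"
    then show "(x + y - (orth_proj P x + orth_proj P y)) \<bullet> z = 0"
      using orth_proj_orthogonal[OF assms, of z x] orth_proj_orthogonal[OF assms, of z y]
      by (simp add: algebra_simps)
  qed
next
  fix c x
  show "orth_proj P (c *\<^sub>R x) = c *\<^sub>R orth_proj P x"
  proof (rule orth_proj_eqI[OF assms])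
    show "c *\<^sub>R orth_proj P x \<in> P"
      using assms by (simp add: orth_proj_in subspace_scale)
    fix z assume "z \<in> P"
    then show "(c *\<^sub>R x - c *\<^sub>R orth_proj P x) \<bullet> z = 0"
      using orth_proj_orthogonal[OF assms, of z x]
      by (simp flip: scaleR_diff_right)
  qed
qed

lemma orth_proj_id:
  fixes P :: "'a::euclidean_space set"
  shows "subspace P \<Longrightarrow> y \<in> P \<Longrightarrow> orth_proj P y = y"
  by (rule orth_proj_eqI) auto

lemma orth_proj_complement:
  fixes P :: "'a::euclidean_space set"
  assumes "subspace P"
  shows "orth_proj P (x - orth_proj P x) = 0"
  using assms by (simp add: linear_diff[OF linear_orth_proj] orth_proj_id orth_proj_in)

lemma orth_proj_lift:
  fixes P :: "'a::euclidean_space set"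
  assumes "subspace P" "y \<in> P"
  shows "orth_proj P (y + (x - orth_proj P x)) = y"
  using assms by (simp add: linear_add[OF linear_orth_proj] orth_proj_complement orth_proj_id)

lemma image_orth_proj_if_lift:
  fixes P :: "'a::euclidean_space set"
  assumes "subspace P" "y \<in> P" "y + (x - orth_proj P x) \<in> A"
  shows "y \<in> orth_proj P ` A"
  using assms by (metis image_eqI orth_proj_lift)

lemma norm_orth_proj_le:
  fixes P :: "'a::euclidean_space set"
  assumes "subspace P"
  shows "norm (orth_proj P x) \<le> norm x"
proof -
  have "orthogonal (orth_proj P x) (x - orth_proj P x)"
    using orth_proj_orthogonal[OF assms orth_proj_in[OF assms], of x]
    by (simp add: orthogonal_def inner_commute)
  then have "norm x ^ 2 = norm (orth_proj P x) ^ 2 + norm (x - orth_proj P x) ^ 2"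
    by (metis norm_add_Pythagorean add.commute diff_add_cancel)
  then show ?thesis
    by (simp add: power2_le_imp_le)
qed

lemma dist_orth_proj_le:
  fixes P :: "'a::euclidean_space set"
  assumes "subspace P"
  shows "dist (orth_proj P x) (orth_proj P y) \<le> dist x y"
  using norm_orth_proj_le[OF assms, of "x - y"]
  by (simp add: dist_norm linear_diff[OF linear_orth_proj[OF assms]])

lemma orth_proj_ball:
  fixes P :: "'a::euclidean_space set"
  assumes "subspace P"
  shows "orth_proj P ` ball a r = ball (orth_proj P a) r \<inter> P"
proof
  show "orth_proj P ` ball a r \<subseteq> ball (orth_proj P a) r \<inter> P"
    using orth_proj_in[OF assms]
    by (auto intro: le_less_trans[OF dist_orth_proj_le[OF assms]])
  show "ball (orth_proj P a) r \<inter> P \<subseteq> orth_proj P ` ball a r"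
  proof
    fix y assume "y \<in> ball (orth_proj P a) r \<inter> P"
    moreover have "dist a (y + (a - orth_proj P a)) = dist (orth_proj P a) y"
      by (simp add: dist_norm algebra_simps)
    ultimately show "y \<in> orth_proj P ` ball a r"
      by (intro image_orth_proj_if_lift[OF assms, of y a]) auto
  qed
qed

lemma orth_proj_cball:
  fixes P :: "'a::euclidean_space set"
  assumes "subspace P"
  shows "orth_proj P ` cball a r = cball (orth_proj P a) r \<inter> P"
proof
  show "orth_proj P ` cball a r \<subseteq> cball (orth_proj P a) r \<inter> P"
    using orth_proj_in[OF assms]
    by (auto intro: order_trans[OF dist_orth_proj_le[OF assms]])
  show "cball (orth_proj P a) r \<inter> P \<subseteq> orth_proj P ` cball a r"
  proof
    fix y assume "y \<in> cball (orth_proj P a) r \<inter> P"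
    moreover have "dist a (y + (a - orth_proj P a)) = dist (orth_proj P a) y"
      by (simp add: dist_norm algebra_simps)
    ultimately show "y \<in> orth_proj P ` cball a r"
      by (intro image_orth_proj_if_lift[OF assms, of y a]) auto
  qed
qed

lemma orth_proj_in_interior_of_image:
  fixes P :: "'a::euclidean_space set"
  assumes "subspace P" "open U" "U \<subseteq> K" "x \<in> U"
  shows "orth_proj P x \<in> top_of_set P interior_of (orth_proj P ` K)"
proof -
  obtain e where "e > 0" "ball x e \<subseteq> U"
    using assms(2,4) open_contains_ball by blast
  then have "ball (orth_proj P x) e \<inter> P \<subseteq> orth_proj P ` K"
    using assms(3) by (auto simp flip: orth_proj_ball[OF assms(1)])
  moreover have "openin (top_of_set P) (ball (orth_proj P x) e \<inter> P)"
    by (simp add: openin_open_Int Int_commute)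
  moreover have "orth_proj P x \<in> ball (orth_proj P x) e \<inter> P"
    using \<open>e > 0\<close> orth_proj_in[OF assms(1)] by simp
  ultimately show ?thesis
    by (meson interior_of_maximal subsetD)
qed

lemma compact_orth_proj_image:
  fixes P K :: "'a::euclidean_space set"
  assumes "subspace P" "compact K"
  shows "compact (orth_proj P ` K)"
  using linear_orth_proj[OF assms(1)] assms(2)
  by (simp add: compact_continuous_image linear_continuous_on linear_conv_bounded_linear)

lemma frontier_of_orth_proj_image:
  fixes P :: "'a::euclidean_space set"
  assumes "subspace P" "compact K" "q \<in> top_of_set P frontier_of (orth_proj P ` K)"
  obtains p where "p \<in> frontier K" "orth_proj P p = q"
proof -
  have "compact (orth_proj P ` K)"
    using assms(1,2) by (rule compact_orth_proj_image)
  then have "closedin (top_of_set P) (orth_proj P ` K)"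
    using orth_proj_in[OF assms(1)] by (auto intro: closed_subset compact_imp_closed)
  then have "q \<in> orth_proj P ` K" "q \<notin> top_of_set P interior_of (orth_proj P ` K)"
    using assms(3) by (auto simp: frontier_of_def closure_of_closedin)
  then obtain p where "p \<in> K" "orth_proj P p = q" "p \<notin> interior K"
    using orth_proj_in_interior_of_image[OF assms(1) open_interior interior_subset] by blast
  then show thesis
    using that assms(2) by (simp add: frontier_def compact_imp_closed)
qed

lemma inner_ball_normal_in_subspace:
  fixes P K :: "'a::euclidean_space set"
  assumes P: "subspace P" and "\<delta> > 0" and K: "ball p \<delta> \<inter> cball c r \<subseteq> K" and "dist c p = r"
    and not_interior: "orth_proj P p \<notin> top_of_set P interior_of (orth_proj P ` K)"
  shows "c - p \<in> P"
proof (rule ccontr)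
  assume "c - p \<notin> P"
  define d where "d = c - p"
  define e where "e = d - orth_proj P d"
  have "e \<noteq> 0"
    using \<open>c - p \<notin> P\<close> orth_proj_in[OF P, of d] by (auto simp: e_def d_def)
  have "e \<bullet> d = e \<bullet> e"
    using orth_proj_orthogonal[OF P orth_proj_in[OF P], of d]
    by (simp add: e_def inner_diff_left inner_diff_right inner_commute)
  define t where "t = min 1 (\<delta> / (2 * norm e))"
  have "0 < t" "t \<le> 1" "t * norm e < \<delta>"
    using \<open>e \<noteq> 0\<close> \<open>\<delta> > 0\<close> by (auto simp: t_def min_def field_simps)
  define x where "x = p + t *\<^sub>R e"
  have "(x - c) \<bullet> (x - c) = d \<bullet> d - t * (2 - t) * (e \<bullet> e)"
    using \<open>e \<bullet> d = e \<bullet> e\<close>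
    by (simp add: x_def d_def algebra_simps inner_commute)
  also have "\<dots> < d \<bullet> d"
    using \<open>e \<noteq> 0\<close> \<open>0 < t\<close> \<open>t \<le> 1\<close> by simp
  finally have "norm (x - c) < norm d"
    by (simp add: norm_lt)
  then have "dist x c < r"
    using \<open>dist c p = r\<close> by (simp add: d_def dist_norm)
  moreover have "dist x p < \<delta>"
    using \<open>0 < t\<close> \<open>t * norm e < \<delta>\<close> by (simp add: x_def dist_norm)
  moreover have "orth_proj P x = orth_proj P p"
    using P by (simp add: x_def e_def linear_add[OF linear_orth_proj] linear_scale[OF linear_orth_proj]
        orth_proj_complement)
  ultimately have "orth_proj P p \<in> top_of_set P interior_of (orth_proj P ` K)"
    using K orth_proj_in_interior_of_image[OF P, of "ball p \<delta> \<inter> ball c r" K x]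
    by (force simp: dist_commute)
  with not_interior show False ..
qed

lemma local_cball_subset_orth_proj_image:
  fixes P K :: "'a::euclidean_space set"
  assumes P: "subspace P" and K: "ball p \<delta> \<inter> cball c r \<subseteq> K" and "c - p \<in> P"
  shows "cball (orth_proj P p + (c - p)) r \<inter> P \<inter> ball (orth_proj P p) \<delta> \<subseteq> orth_proj P ` K"
proof
  fix y assume y: "y \<in> cball (orth_proj P p + (c - p)) r \<inter> P \<inter> ball (orth_proj P p) \<delta>"
  have "dist p (y + (p - orth_proj P p)) = dist (orth_proj P p) y"
    "dist c (y + (p - orth_proj P p)) = dist (orth_proj P p + (c - p)) y"
    by (simp_all add: dist_norm algebra_simps)
  then have "y + (p - orth_proj P p) \<in> K"
    using y K by auto
  then show "y \<in> orth_proj P ` K"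
    using y by (intro image_orth_proj_if_lift[OF P]) auto
qed

lemma convex_body_in_orth_proj:
  fixes P K :: "'a::euclidean_space set"
  assumes P: "subspace P" and K: "convex_body_in UNIV K"
  shows "convex_body_in P (orth_proj P ` K)"
  unfolding convex_body_in_def
proof (intro conjI)
  have "compact K" "convex K" "interior K \<noteq> {}"
    using K by (simp_all add: convex_body_in_def)
  show "orth_proj P ` K \<subseteq> P"
    using orth_proj_in[OF P] by blast
  show "compact (orth_proj P ` K)"
    using P \<open>compact K\<close> by (rule compact_orth_proj_image)
  show "convex (orth_proj P ` K)"
    using linear_orth_proj[OF P] \<open>convex K\<close> by (rule convex_linear_image)
  obtain x where "x \<in> interior K"
    using \<open>interior K \<noteq> {}\<close> by blast
  then show "top_of_set P interior_of orth_proj P ` K \<noteq> {}"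
    using orth_proj_in_interior_of_image[OF P open_interior interior_subset] by blast
qed

lemma lambda_concave_in_orth_proj:
  fixes P K :: "'a::euclidean_space set"
  assumes P: "subspace P" and K: "lambda_concave_in UNIV l K"
  shows "lambda_concave_in P l (orth_proj P ` K)"
  unfolding lambda_concave_in_def
proof (intro conjI ballI)
  have body: "convex_body_in UNIV K"
    using K by (simp add: lambda_concave_in_def)
  then show "convex_body_in P (orth_proj P ` K)"
    by (rule convex_body_in_orth_proj[OF P])
  have inner: "\<forall>p\<in>frontier K. \<exists>c. dist c p = 1 / l \<and>
                 (\<exists>U. open U \<and> p \<in> U \<and> cball c (1 / l) \<inter> U \<subseteq> K \<inter> U)"
    using K by (simp add: lambda_concave_in_def flip: open_openin)
  have "compact K"
    using body by (simp add: convex_body_in_def)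
  fix q assume q: "q \<in> top_of_set P frontier_of orth_proj P ` K"
  obtain p where "p \<in> frontier K" and qp: "orth_proj P p = q"
    using frontier_of_orth_proj_image[OF P \<open>compact K\<close> q] by blast
  then obtain c U where "dist c p = 1 / l" "open U" "p \<in> U" "cball c (1 / l) \<inter> U \<subseteq> K \<inter> U"
    using inner by blast
  moreover obtain \<delta> where "\<delta> > 0" "ball p \<delta> \<subseteq> U"
    using \<open>open U\<close> \<open>p \<in> U\<close> open_contains_ball by blast
  ultimately have ball_K: "ball p \<delta> \<inter> cball c (1 / l) \<subseteq> K"
    by blast
  have "orth_proj P p \<notin> top_of_set P interior_of (orth_proj P ` K)"
    using q qp by (simp add: frontier_of_def)
  then have "c - p \<in> P"
    using inner_ball_normal_in_subspace[OF P \<open>\<delta> > 0\<close> ball_K \<open>dist c p = 1 / l\<close>] by blast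
  show "\<exists>c'\<in>P. dist c' q = 1 / l \<and> (\<exists>U'. openin (top_of_set P) U' \<and> q \<in> U' \<and>
                 cball c' (1 / l) \<inter> P \<inter> U' \<subseteq> orth_proj P ` K \<inter> U')"
  proof (intro bexI conjI exI)
    show "q + (c - p) \<in> P"
      using P orth_proj_in[OF P, of p] \<open>c - p \<in> P\<close> by (simp add: qp[symmetric] subspace_add)
    show "dist (q + (c - p)) q = 1 / l"
      using \<open>dist c p = 1 / l\<close> by (simp add: dist_norm)
    show "openin (top_of_set P) (ball q \<delta> \<inter> P)"
      by (simp add: openin_open_Int Int_commute)
    show "q \<in> ball q \<delta> \<inter> P"
      using \<open>\<delta> > 0\<close> orth_proj_in[OF P, of p] by (simp add: qp[symmetric])
    show "cball (q + (c - p)) (1 / l) \<inter> P \<inter> (ball q \<delta> \<inter> P) \<subseteq> orth_proj P ` K \<inter> (ball q \<delta> \<inter> P)"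
      using local_cball_subset_orth_proj_image[OF P ball_K \<open>c - p \<in> P\<close>] by (auto simp: qp)
  qed
qed

lemma lambda_sausage_in_orth_proj:
  fixes P K :: "'a::euclidean_space set"
  assumes P: "subspace P" and K: "lambda_sausage_in UNIV l K"
  shows "lambda_sausage_in P l (orth_proj P ` K)"
proof -
  obtain a b where "K = convex hull (cball a (1 / l) \<union> cball b (1 / l))"
    using K by (auto simp: lambda_sausage_in_def)
  then have "orth_proj P ` K = convex hull
      (cball (orth_proj P a) (1 / l) \<inter> P \<union> cball (orth_proj P b) (1 / l) \<inter> P)"
    by (simp add: convex_hull_linear_image[OF linear_orth_proj[OF P]] image_Un orth_proj_cball[OF P])
  then show ?thesis
    unfolding lambda_sausage_in_def using orth_proj_in[OF P] by blast
qed

theorem lemma2p4: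
  fixes K P :: "'a::euclidean_space set" and l :: real
  assumes "l > 0"
    and "lambda_concave_in UNIV l K"
    and "subspace P" and "dim P \<ge> 2"
  shows "lambda_concave_in P l (orth_proj P ` K)
         \<and> (lambda_sausage_in UNIV l K \<longrightarrow> lambda_sausage_in P l (orth_proj P ` K))"
  using assms by (simp add: lambda_concave_in_orth_proj lambda_sausage_in_orth_proj)

end
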